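(* Let $W$ be a channel over the alphabet $\mathcal{X}$. If $W$ admits a decision chain of length $r\ge 3$, then there is no metric on $\mathcal{X}$ matched to $W$.
   Context: A channel $W:\mathcal{X}\to\mathcal{X}$ is given by a conditional probability distribution $\Pr:\mathcal{X}\times\mathcal{X}\to\mathbb{R}$, where $\Pr(x\mid y)=\Pr(x\text{ received}\mid y\text{ sent})\ge 0$ and $\sum_{x}\Pr(x\mid y)=1$ for every $y$. All codewords are assumed equally likely. A channel $W$ and a metric $d$ on $\mathcal{X}$ are matched if for every (nonempty) code $C\subseteq\mathcal{X}$ and every $x\in\mathcal{X}$, $\operatorname{argmax}_{y\in C}\Pr(x\mid y)=\operatorname{argmin}_{y\in C}d(x,y)$ (equality of sets). For $x\in\mathcal{X}$ and $0\le t\le 1$, the $t$-decision region centered at $x$ is $B^t(x)=\{y\in\mathcal{X}:\Pr(x\mid y)\ge t\}$. Elements $x_0,x_1,\dots,x_{r-1}\in\mathcal{X}$ form a decision chain of length $r$ on $W$ if there are real numbers $t_0,\dots,t_{r-1}>0$ such that for every $i$ (indices taken modulo $r$): $x_{i+1}\in B^{t_i}(x_i)$ (forward inclusion) and $x_i\notin B^{t_{i+1}}(x_{i+1})$ (backward exclusion). *)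

theory Defs
  imports Complex_Main
begin

text \<open>A channel over a finite alphabet 'a: W x y = Pr(x received | y sent).\<close>
definition channel :: "('a::finite \<Rightarrow> 'a \<Rightarrow> real) \<Rightarrow> bool" where
  "channel W \<longleftrightarrow> (\<forall>x y. W x y \<ge> 0) \<and> (\<forall>y. (\<Sum>x\<in>UNIV. W x y) = 1)"

definition is_metric :: "('a \<Rightarrow> 'a \<Rightarrow> real) \<Rightarrow> bool" where
  "is_metric d \<longleftrightarrow> (\<forall>x y. d x y \<ge> 0) \<and> (\<forall>x y. d x y = 0 \<longleftrightarrow> x = y)
     \<and> (\<forall>x y. d x y = d y x) \<and> (\<forall>x y z. d x z \<le> d x y + d y z)"

definition argmax_on :: "('a \<Rightarrow> real) \<Rightarrow> 'a set \<Rightarrow> 'a set" where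
  "argmax_on f C = {y \<in> C. \<forall>z\<in>C. f z \<le> f y}"

definition argmin_on :: "('a \<Rightarrow> real) \<Rightarrow> 'a set \<Rightarrow> 'a set" where
  "argmin_on f C = {y \<in> C. \<forall>z\<in>C. f y \<le> f z}"

definition matched :: "('a \<Rightarrow> 'a \<Rightarrow> real) \<Rightarrow> ('a \<Rightarrow> 'a \<Rightarrow> real) \<Rightarrow> bool" where
  "matched W d \<longleftrightarrow> (\<forall>C x. C \<noteq> {} \<longrightarrow> argmax_on (\<lambda>y. W x y) C = argmin_on (\<lambda>y. d x y) C)"

definition decision_region :: "('a \<Rightarrow> 'a \<Rightarrow> real) \<Rightarrow> real \<Rightarrow> 'a \<Rightarrow> 'a set" where
  "decision_region W t x = {y. W x y \<ge> t}"

definition decision_chain :: "('a \<Rightarrow> 'a \<Rightarrow> real) \<Rightarrow> nat \<Rightarrow> (nat \<Rightarrow> 'a) \<Rightarrow> bool" where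
  "decision_chain W r xs \<longleftrightarrow> (\<exists>t :: nat \<Rightarrow> real.
      (\<forall>i<r. 0 < t i \<and> t i \<le> 1) \<and>
      (\<forall>i<r. xs ((i+1) mod r) \<in> decision_region W (t i) (xs i)) \<and>
      (\<forall>i<r. xs i \<notin> decision_region W (t ((i+1) mod r)) (xs ((i+1) mod r))))"

end

theory Submission
  imports Defs
begin

text \<open>Under a matched metric, a strictly larger likelihood W x y means a strictly smaller
  distance d x y (test the two-word code {y, z}). Along a decision chain, forward inclusion
  and backward exclusion say that, when x(i+1) is received, x(i+2) is strictly more likely to
  have been sent than x(i); hence d(x(i+1), x(i+2)) < d(x(i), x(i+1)) by symmetry of d, and
  going once around the cycle gives d(x(0), x(1)) < d(x(0), x(1)).\<close>

lemma matched_less_imp_dist_less: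
  assumes "matched W d" and "W x y < W x z"
  shows "d x z < d x y"
proof -
  have "argmax_on (\<lambda>u. W x u) {y, z} = argmin_on (\<lambda>u. d x u) {y, z}"
    using assms(1) unfolding matched_def by blast
  moreover have "y \<notin> argmax_on (\<lambda>u. W x u) {y, z}"
    using assms(2) unfolding argmax_on_def by auto
  ultimately have "y \<notin> argmin_on (\<lambda>u. d x u) {y, z}" by simp
  then show ?thesis unfolding argmin_on_def by auto
qed

lemma decision_chain_likelihood_less:
  assumes "decision_chain W r xs" and "i < r"
  defines "j \<equiv> (i + 1) mod r"
  shows "W (xs j) (xs i) < W (xs j) (xs ((j + 1) mod r))"
proof -
  obtain t where
    fw: "\<forall>i<r. xs ((i+1) mod r) \<in> decision_region W (t i) (xs i)" and
    bw: "\<forall>i<r. xs i \<notin> decision_region W (t ((i+1) mod r)) (xs ((i+1) mod r))"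
    using assms(1) unfolding decision_chain_def by blast
  have "j < r" using assms(2) by (simp add: j_def)
  have "W (xs j) (xs i) < t j"
    using bw assms(2) unfolding decision_region_def j_def by auto
  also have "t j \<le> W (xs j) (xs ((j + 1) mod r))"
    using fw \<open>j < r\<close> unfolding decision_region_def by auto
  finally show ?thesis .
qed

lemma no_cyclic_strict_descent:
  fixes f :: "nat \<Rightarrow> 'b::preorder"
  assumes "0 < r" and descent: "\<And>i. i < r \<Longrightarrow> f ((i + 1) mod r) < f i"
  shows False
proof -
  have "f (Suc k mod r) < f 0" for k
  proof (induction k)
    case 0
    show ?case using descent[of 0] assms(1) by simp
  next
    case (Suc k)
    have "f ((Suc k mod r + 1) mod r) < f (Suc k mod r)"
      using descent assms(1) by simp
    then show ?case using Suc.IH by (simp add: mod_Suc_eq less_trans)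
  qed
  from this[of "r - 1"] show False using assms(1) by simp
qed

theorem mainTheorem3:
  fixes W :: "'a::finite \<Rightarrow> 'a \<Rightarrow> real" and r :: nat and xs :: "nat \<Rightarrow> 'a"
  assumes "channel W"
    and "r \<ge> 3"
    and "decision_chain W r xs"
  shows "\<not> (\<exists>d. is_metric d \<and> matched W d)"
proof
  assume "\<exists>d. is_metric d \<and> matched W d"
  then obtain d where "is_metric d" and "matched W d" by blast
  define D where "D i = d (xs i) (xs ((i + 1) mod r))" for i
  have "D ((i + 1) mod r) < D i" if "i < r" for i
  proof -
    have "D ((i + 1) mod r) < d (xs ((i + 1) mod r)) (xs i)"
      using matched_less_imp_dist_less[OF \<open>matched W d\<close>
          decision_chain_likelihood_less[OF assms(3) that]]
      unfolding D_def .
    also have "\<dots> = D i"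
      using \<open>is_metric d\<close> unfolding is_metric_def D_def by simp
    finally show ?thesis .
  qed
  then show False
    using no_cyclic_strict_descent[of r D] assms(2) by simp
qed

end
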